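(* In the setting described in the context, let $w:\mathcal{K}(\mathbb{R}^n)\to\mathbb{R}$ satisfy $w(X)-w(F(X))=\beta(X)\,(1-w(X))$ for all $X\in\mathcal{K}(\mathbb{R}^n)$, where $\beta(X):=\exp(\Psi(X))-1$, be finite on $\mathcal{K}_{\mathcal{D}_{\mathcal{A}}}(\mathbb{R}^n)$, and satisfy $\lim_{k\to\infty}w(\mathcal{R}(X,k))=0$ for every $X\in\mathcal{K}_{\mathcal{D}_{\mathcal{A}}}(\mathbb{R}^n)$. Then $w(X)<1$ for all $X\in\mathcal{K}_{\mathcal{D}_{\mathcal{A}}}(\mathbb{R}^n)$.
   Context: Let $\|\cdot\|$ be a norm on $\mathbb{R}^n$ and $\mathrm{dist}(x,\Omega):=\inf_{y\in\Omega}\|x-y\|$. Let $\mathcal{K}(\mathbb{R}^n)$ denote the nonempty compact subsets of $\mathbb{R}^n$. Consider $x_{k+1}=f(x_k,u_k)$ with $f:\mathbb{R}^n\times\mathbb{R}^m\to\mathbb{R}^n$ continuous and inputs $u_k\in U$, $U\subset\mathbb{R}^m$ nonempty compact. Define $F(X):=\{f(x,u):x\in X,u\in U\}$ for $X\in\mathcal{K}(\mathbb{R}^n)$. For $x\in\mathbb{R}^n$ and $\pi:\mathbb{Z}_+\to U$, $\varphi_x^\pi(0)=x$, $\varphi_x^\pi(k+1)=f(\varphi_x^\pi(k),\pi(k))$; $\mathcal{R}(X,k):=\{\varphi_x^\pi(k):x\in X,\pi\in U^{\mathbb{Z}_+}\}$. Let $\mathcal{A}\in\mathcal{K}(\mathbb{R}^n)$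 be controlled invariant. Assume local $\ell_p$-stabilizability: there exist $r>0$, $M\ge1$, $p>0$, $\lambda:[0,r]\times\mathbb{Z}_+\to\mathbb{R}_+$ such that (1) for each $k$, $s\mapsto\lambda(s,k)$ is continuous, nondecreasing, $\lambda(0,k)=0$; for each $s$, $k\mapsto\lambda(s,k)$ is nonincreasing, $\lambda(s,0)\le s$; (2) $\sum_{k}\lambda(r,k)^p<\infty$; (3) for every $x$ with $\mathrm{dist}(x,\mathcal{A})\le r$ there is $\pi\in U^{\mathbb{Z}_+}$ with $\mathrm{dist}(\varphi_x^\pi(k),\mathcal{A})\le M\lambda(\mathrm{dist}(x,\mathcal{A}),k)$ for all $k$. Let $\mathcal{D}_{\mathcal{A}}:=\{x:\exists\pi\in U^{\mathbb{Z}_+},\ \lim_{k\to\infty}\mathrm{dist}(\varphi_x^\pi(k),\mathcal{A})=0\}$ and $\mathcal{K}_{\mathcal{D}_{\mathcal{A}}}(\mathbb{R}^n):=\{X\in\mathcal{K}(\mathbb{R}^n):X\cap\mathcal{D}_{\mathcal{A}}\neq\emptyset\}$. Let $\alpha:\mathbb{R}^n\to\mathbb{R}_+$ be continuous with $\underline{\alpha}\,\mathrm{dist}(x,\mathcal{A})^{\bar p}\le\alpha(x)\le\overline{\alpha}\,\mathrm{dist}(x,\mathcal{A})^{\bar p}$, constants $\underline{\alpha},\overline{\alpha}>0$, $\bar p\ge p$. Define $\Psi(X):=\inf_{y\in X}\alpha(y)$. *)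

theory Defs
  imports "HOL-Analysis.Analysis"
begin

definition is_norm :: "('a::real_vector \<Rightarrow> real) \<Rightarrow> bool" where
  "is_norm nrm \<longleftrightarrow> (\<forall>x. 0 \<le> nrm x) \<and> (\<forall>x. nrm x = 0 \<longleftrightarrow> x = 0)
     \<and> (\<forall>c x. nrm (c *\<^sub>R x) = \<bar>c\<bar> * nrm x) \<and> (\<forall>x y. nrm (x + y) \<le> nrm x + nrm y)"

definition setdist :: "('a::real_vector \<Rightarrow> real) \<Rightarrow> 'a set \<Rightarrow> 'a \<Rightarrow> real" where
  "setdist nrm \<Omega> x = (INF y\<in>\<Omega>. nrm (x - y))"

definition Kset :: "'a::topological_space set set" where
  "Kset = {X. compact X \<and> X \<noteq> {}}"

definition Fmap :: "('a \<Rightarrow> 'b \<Rightarrow> 'a) \<Rightarrow> 'b set \<Rightarrow> 'a set \<Rightarrow> 'a set" where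
  "Fmap f U X = {f x u | x u. x \<in> X \<and> u \<in> U}"

primrec traj :: "('a \<Rightarrow> 'b \<Rightarrow> 'a) \<Rightarrow> 'a \<Rightarrow> (nat \<Rightarrow> 'b) \<Rightarrow> nat \<Rightarrow> 'a" where
  "traj f x \<pi> 0 = x"
| "traj f x \<pi> (Suc k) = f (traj f x \<pi> k) (\<pi> k)"

definition Reach :: "('a \<Rightarrow> 'b \<Rightarrow> 'a) \<Rightarrow> 'b set \<Rightarrow> 'a set \<Rightarrow> nat \<Rightarrow> 'a set" where
  "Reach f U X k = {traj f x \<pi> k | x \<pi>. x \<in> X \<and> (\<forall>j. \<pi> j \<in> U)}"

definition controlled_invariant :: "('a \<Rightarrow> 'b \<Rightarrow> 'a) \<Rightarrow> 'b set \<Rightarrow> 'a set \<Rightarrow> bool" where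
  "controlled_invariant f U A \<longleftrightarrow> (\<forall>x\<in>A. \<exists>u\<in>U. f x u \<in> A)"

definition lp_stabilizable ::
  "('a::real_vector \<Rightarrow> real) \<Rightarrow> ('a \<Rightarrow> 'b \<Rightarrow> 'a) \<Rightarrow> 'b set \<Rightarrow> 'a set
   \<Rightarrow> real \<Rightarrow> real \<Rightarrow> real \<Rightarrow> (real \<Rightarrow> nat \<Rightarrow> real) \<Rightarrow> bool" where
  "lp_stabilizable nrm f U A r M p lam \<longleftrightarrow>
     r > 0 \<and> M \<ge> 1 \<and> p > 0 \<and>
     (\<forall>s\<in>{0..r}. \<forall>k. lam s k \<ge> 0) \<and>
     (\<forall>k. continuous_on {0..r} (\<lambda>s. lam s k) \<and> mono_on {0..r} (\<lambda>s. lam s k) \<and> lam 0 k = 0) \<and>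
     (\<forall>s\<in>{0..r}. antimono (lam s) \<and> lam s 0 \<le> s) \<and>
     summable (\<lambda>k. lam r k powr p) \<and>
     (\<forall>x. setdist nrm A x \<le> r \<longrightarrow>
        (\<exists>\<pi>. (\<forall>j. \<pi> j \<in> U) \<and>
           (\<forall>k. setdist nrm A (traj f x \<pi> k) \<le> M * lam (setdist nrm A x) k)))"

definition domain_attr :: "('a::real_vector \<Rightarrow> real) \<Rightarrow> ('a \<Rightarrow> 'b \<Rightarrow> 'a) \<Rightarrow> 'b set \<Rightarrow> 'a set \<Rightarrow> 'a set" where
  "domain_attr nrm f U A = {x. \<exists>\<pi>. (\<forall>j. \<pi> j \<in> U) \<and>
      (\<lambda>k. setdist nrm A (traj f x \<pi> k)) \<longlonglongrightarrow> 0}"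

definition Kset_D :: "'a::topological_space set \<Rightarrow> 'a set set" where
  "Kset_D D = {X \<in> Kset. X \<inter> D \<noteq> {}}"

definition Psi :: "('a \<Rightarrow> real) \<Rightarrow> 'a set \<Rightarrow> real" where
  "Psi \<alpha> X = (INF y\<in>X. \<alpha> y)"

end

theory Submission
  imports Defs
begin

text \<open>If \<open>w X \<ge> 1\<close>, the functional equation rewritten as
  \<open>1 - w (F X) = exp (\<Psi> X) * (1 - w X)\<close> shows \<open>w (F X) \<ge> 1\<close>, because \<open>exp\<close> is positive.
  Since \<open>\<R>(X, k) = F\<^sup>k(X)\<close> stays in \<open>\<K>(\<real>\<^sup>n)\<close>, we get \<open>w (\<R>(X, k)) \<ge> 1\<close> for all \<open>k\<close>,
  which contradicts \<open>w (\<R>(X, k)) \<longrightarrow> 0\<close>.\<close>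

lemma traj_cong: "(\<forall>j<k. \<pi> j = \<pi>' j) \<Longrightarrow> traj f x \<pi> k = traj f x \<pi>' k"
  by (induction k) auto

lemma Reach_0:
  assumes "U \<noteq> {}"
  shows "Reach f U X 0 = X"
proof -
  obtain u where "u \<in> U" using assms by blast
  then have "\<forall>j. (\<lambda>_. u) j \<in> U" by simp
  then show ?thesis unfolding Reach_def by force
qed

lemma Reach_Suc: "Reach f U X (Suc k) = Fmap f U (Reach f U X k)"
proof (intro set_eqI iffI)
  fix y assume "y \<in> Reach f U X (Suc k)"
  then show "y \<in> Fmap f U (Reach f U X k)"
    unfolding Reach_def Fmap_def by auto
next
  fix y assume "y \<in> Fmap f U (Reach f U X k)"
  then obtain x \<pi> u where y: "y = f (traj f x \<pi> k) u" and "x \<in> X"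
      and \<pi>: "\<forall>j. \<pi> j \<in> U" and "u \<in> U"
    unfolding Reach_def Fmap_def by blast
  define \<pi>' where "\<pi>' = \<pi>(k := u)"
  have "traj f x \<pi> k = traj f x \<pi>' k" by (rule traj_cong) (simp add: \<pi>'_def)
  then have "y = traj f x \<pi>' (Suc k)" using y by (simp add: \<pi>'_def)
  moreover have "\<forall>j. \<pi>' j \<in> U" using \<pi> \<open>u \<in> U\<close> by (simp add: \<pi>'_def)
  ultimately show "y \<in> Reach f U X (Suc k)" unfolding Reach_def using \<open>x \<in> X\<close> by blast
qed

lemma Fmap_in_Kset:
  assumes "continuous_on UNIV (\<lambda>(x, u). f x u)" "compact U" "U \<noteq> {}" "X \<in> Kset"
  shows "Fmap f U X \<in> Kset"
proof -
  have image: "Fmap f U X = (\<lambda>(x, u). f x u) ` (X \<times> U)" unfolding Fmap_def by auto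
  have "compact (X \<times> U)" "X \<times> U \<noteq> {}" using assms by (auto simp: Kset_def intro: compact_Times)
  moreover have "continuous_on (X \<times> U) (\<lambda>(x, u). f x u)"
    using assms(1) by (rule continuous_on_subset) simp
  ultimately show ?thesis unfolding image Kset_def by (auto intro: compact_continuous_image)
qed

lemma Reach_in_Kset:
  assumes "continuous_on UNIV (\<lambda>(x, u). f x u)" "compact U" "U \<noteq> {}" "X \<in> Kset"
  shows "Reach f U X k \<in> Kset"
  by (induction k) (use assms in \<open>simp_all add: Reach_0 Reach_Suc Fmap_in_Kset\<close>)

lemma Fmap_ge_one:
  fixes b :: real
  assumes "w X - w (Fmap f U X) = (exp b - 1) * (1 - w X)" "w X \<ge> 1"
  shows "w (Fmap f U X) \<ge> 1"
proof -
  have "1 - w (Fmap f U X) = exp b * (1 - w X)"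
    using assms(1) by (simp add: algebra_simps)
  also have "\<dots> \<le> 0"
    using assms(2) by (intro mult_nonneg_nonpos) auto
  finally show ?thesis by simp
qed

lemma Reach_ge_one:
  fixes b :: "'a::topological_space set \<Rightarrow> real"
  assumes "continuous_on UNIV (\<lambda>(x, u). f x u)" "compact U" "U \<noteq> {}" "X \<in> Kset"
    and "\<forall>Y\<in>Kset. w Y - w (Fmap f U Y) = (exp (b Y) - 1) * (1 - w Y)"
    and "w X \<ge> 1"
  shows "w (Reach f U X k) \<ge> 1"
proof (induction k)
  case 0
  then show ?case using assms by (simp add: Reach_0)
next
  case (Suc k)
  have "Reach f U X k \<in> Kset" using assms(1-4) by (rule Reach_in_Kset)
  then have "w (Fmap f U (Reach f U X k)) \<ge> 1"
    using assms(5) Suc by (blast intro: Fmap_ge_one)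
  then show ?case by (simp add: Reach_Suc)
qed

theorem lemma12:
  fixes nrm :: "real^'n \<Rightarrow> real"
    and f :: "real^'n \<Rightarrow> real^'m \<Rightarrow> real^'n"
    and U :: "(real^'m) set"
    and A :: "(real^'n) set"
    and r M p pbar alo ahi :: real
    and lam :: "real \<Rightarrow> nat \<Rightarrow> real"
    and \<alpha> :: "real^'n \<Rightarrow> real"
    and w :: "(real^'n) set \<Rightarrow> real"
  assumes "is_norm nrm"
    and "continuous_on UNIV (\<lambda>(x, u). f x u)"
    and "compact U" and "U \<noteq> {}"
    and "A \<in> Kset"
    and "controlled_invariant f U A"
    and "lp_stabilizable nrm f U A r M p lam"
    and "continuous_on UNIV \<alpha>" and "\<forall>x. \<alpha> x \<ge> 0"
    and "alo > 0" and "ahi > 0" and "pbar \<ge> p"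
    and "\<forall>x. alo * setdist nrm A x powr pbar \<le> \<alpha> x \<and> \<alpha> x \<le> ahi * setdist nrm A x powr pbar"
    and "\<forall>X\<in>Kset. w X - w (Fmap f U X) = (exp (Psi \<alpha> X) - 1) * (1 - w X)"
    and "\<forall>X\<in>Kset_D (domain_attr nrm f U A). (\<lambda>k. w (Reach f U X k)) \<longlonglongrightarrow> 0"
  shows "\<forall>X\<in>Kset_D (domain_attr nrm f U A). w X < 1"
proof
  fix X assume X: "X \<in> Kset_D (domain_attr nrm f U A)"
  show "w X < 1"
  proof (rule ccontr)
    assume "\<not> w X < 1"
    then have "w (Reach f U X k) \<ge> 1" for k
      using Reach_ge_one[OF assms(2-4) _ assms(14)] X by (simp add: Kset_D_def)
    moreover have "(\<lambda>k. w (Reach f U X k)) \<longlonglongrightarrow> 0" using assms(15) X by blast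
    ultimately have "1 \<le> (0::real)" by (intro LIMSEQ_le_const) auto
    then show False by simp
  qed
qed

end
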